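(* Let $f\in\mathcal{A}_c(\mathbb{R})$. Let $g_1,g_2\in C^2(\mathbb{R})$ be such that $\int_{|t|>1}|t^2g_k^{(n)}(t)|\,dt<\infty$ for $n=0,1,2$ and $k=1,2$. Then $\int_{-\infty}^\infty\widehat{f\ast g_1}\,g_2=\int_{-\infty}^\infty\hat f\,\widehat{g_1}\,g_2$.
   Context: $\mathcal{B}_c(\mathbb{R})$ is the set of $F:[-\infty,\infty]\to\mathbb{C}$ continuous on $\mathbb{R}$ with limits $F(\pm\infty)$ existing and $F(-\infty)=0$. $\mathcal{A}_c(\mathbb{R})$ is the set of tempered distributions $f=F'$ (distributional derivative) with $F\in\mathcal{B}_c(\mathbb{R})$; for $g$ of bounded variation, $\int fg=F(\infty)g(\infty)-\int F\,dg$. For $f\in\mathcal{A}_c(\mathbb{R})$ and $g\in L^1(\mathbb{R})$, $f\ast g\in\mathcal{A}_c(\mathbb{R})$ is the distribution whose primitive is $F\ast g(x)=\int F(x-y)g(y)\,dy$. $v_s(t)=(1-ist-e^{-ist})/t^2$ ($t\neq0$), $v_s(0)=s^2/2$; $\Omega_f(s)=\int v_sf$; the Fourier transform of $f\in\mathcal{A}_c(\mathbb{R})$ is $\hat f=\Omega_f''$ (second distributional derivative), with integrals of $\hat f$ against functions understood as distributional integrals; for $g\in L^1$, $\hat g(s)=\int e^{-ist}g(t)dt$. *)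

theory Defs
  imports "HOL-Analysis.Analysis"
begin

text \<open>Elements f of A_c are represented by their (unique) primitive F in B_c.\<close>

definition Bc :: "(real \<Rightarrow> complex) set" where
  "Bc = {F. continuous_on UNIV F \<and> (\<exists>L. (F \<longlongrightarrow> L) at_top) \<and> (F \<longlongrightarrow> 0) at_bot}"

definition at_pinf :: "(real \<Rightarrow> complex) \<Rightarrow> complex" where
  "at_pinf F = Lim at_top F"

definition vs :: "real \<Rightarrow> real \<Rightarrow> complex" where
  "vs s t = (if t = 0 then complex_of_real (s^2 / 2)
             else (1 - \<i> * complex_of_real (s * t) - exp (- \<i> * complex_of_real (s * t)))
                  / complex_of_real (t^2))"

text \<open>Integral of f = F' against a (BV, here C^1) function g:
  F(inf) g(inf) - int F dg, with dg = g'(t) dt.\<close>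
definition Ac_int :: "(real \<Rightarrow> complex) \<Rightarrow> (real \<Rightarrow> complex) \<Rightarrow> complex" where
  "Ac_int F g = at_pinf F * Lim at_top g
     - (\<integral>t. F t * vector_derivative g (at t) \<partial>lborel)"

definition Omega :: "(real \<Rightarrow> complex) \<Rightarrow> real \<Rightarrow> complex" where
  "Omega F s = Ac_int F (vs s)"

text \<open>Primitive of f * g.\<close>
definition conv_prim :: "(real \<Rightarrow> complex) \<Rightarrow> (real \<Rightarrow> complex) \<Rightarrow> real \<Rightarrow> complex" where
  "conv_prim F g x = (\<integral>y. F (x - y) * g y \<partial>lborel)"

definition FT :: "(real \<Rightarrow> complex) \<Rightarrow> real \<Rightarrow> complex" where
  "FT g s = (\<integral>t. exp (- \<i> * complex_of_real (s * t)) * g t \<partial>lborel)"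

definition second_deriv :: "(real \<Rightarrow> complex) \<Rightarrow> real \<Rightarrow> complex" where
  "second_deriv h s = vector_derivative (\<lambda>x. vector_derivative h (at x)) (at s)"

text \<open>Distributional integral of hat f = Omega_f'' against phi: int Omega_f phi''.\<close>
definition FT_Ac_int :: "(real \<Rightarrow> complex) \<Rightarrow> (real \<Rightarrow> complex) \<Rightarrow> complex" where
  "FT_Ac_int F phi = (\<integral>s. Omega F s * second_deriv phi s \<partial>lborel)"

end

theory Submission
  imports Defs "HOL-Probability.Characteristic_Functions" "HOL-Probability.Sinc_Integral"
begin

(* Since v_s vanishes at infinity, Omega_f(s) = - \<integral> F(t) dvs(s, t) dt with dvs = \<partial>v_s/\<partial>t.
   For a C^2 function \<phi> with finite second tail moments, integrating by parts twice in s gives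
   \<integral> \<phi>''(s) dvs(s, t) ds = - K_\<phi>(t), where K_\<phi> is the Fourier transform of i s \<phi>(s), and the
   bound |dvs(s, t)| \<le> 6 |s|^3 / (1 + s^2 t^2) justifies Fubini, so that \<integral> hat(f) \<phi> = \<integral> F K_\<phi>.
   For \<phi> = hat(g1) g2 a second application of Fubini gives K_\<phi>(u) = \<integral> g1(y) K_g2(y + u) dy, and
   applying the same formula to the primitive F * g1 of f * g1 reduces both sides of the theorem
   to \<integral>\<integral> F(u) g1(y) K_g2(y + u) dy du. *)

section \<open>Real analysis on the line\<close>

lemma Bc_bounded:
  assumes "F \<in> Bc"
  obtains B where "\<And>t. norm (F t) \<le> B"
proof -
  from assms obtain L where cont: "continuous_on UNIV F" and L: "(F \<longlongrightarrow> L) at_top"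
    and z: "(F \<longlongrightarrow> 0) at_bot" unfolding Bc_def by auto
  have "eventually (\<lambda>t. norm (F t) < norm L + 1) at_top"
    using order_tendstoD(2)[OF tendsto_norm[OF L], of "norm L + 1"] by simp
  then obtain b where b: "\<And>t. t \<ge> b \<Longrightarrow> norm (F t) < norm L + 1"
    by (auto simp: eventually_at_top_linorder)
  have "eventually (\<lambda>t. norm (F t) < 1) at_bot"
    using order_tendstoD(2)[OF tendsto_norm[OF z], of 1] by simp
  then obtain a where a: "\<And>t. t \<le> a \<Longrightarrow> norm (F t) < 1"
    by (auto simp: eventually_at_bot_linorder)
  have "compact (F ` {a..b})"
    by (rule compact_continuous_image) (use cont continuous_on_subset compact_Icc in auto)
  then obtain M where M: "\<And>x. x \<in> F ` {a..b} \<Longrightarrow> norm x \<le> M"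
    using compact_imp_bounded bounded_iff by metis
  have "norm (F t) \<le> max (norm L + 1) (max 1 M)" for t
    using a[of t] b[of t] M[of "F t"] by (cases "t \<le> a"; cases "t \<ge> b") auto
  then show ?thesis using that by blast
qed

lemma integrable_tendsto_at_top_imp_0:
  fixes h :: "real \<Rightarrow> 'a::{banach, second_countable_topology}"
  assumes h: "integrable lborel h" and L: "(h \<longlongrightarrow> L) at_top"
  shows "L = 0"
proof (rule ccontr)
  assume "L \<noteq> 0"
  then have c: "norm L / 2 > 0" by simp
  have "eventually (\<lambda>t. norm L / 2 < norm (h t)) at_top"
    using order_tendstoD(1)[OF tendsto_norm[OF L], of "norm L / 2"] \<open>L \<noteq> 0\<close> by simp
  then obtain N where N: "\<And>t. t \<ge> N \<Longrightarrow> norm L / 2 < norm (h t)"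
    by (auto simp: eventually_at_top_linorder)
  have bound: "real n * (norm L / 2) \<le> (\<integral>t. norm (h t) \<partial>lborel)" for n :: nat
  proof -
    have "real n * (norm L / 2) = (\<integral>t. indicator {N..N + real n} t * (norm L / 2) \<partial>lborel)"
      by simp
    also have "\<dots> \<le> (\<integral>t. norm (h t) \<partial>lborel)"
      using h by (intro integral_mono) (auto split: split_indicator dest!: N)
    finally show ?thesis .
  qed
  obtain n :: nat where "(\<integral>t. norm (h t) \<partial>lborel) < real n * (norm L / 2)"
    using ex_less_of_nat_mult[OF c] by blast
  with bound[of n] show False by simp
qed

lemma tendsto_0_at_top_if_integrable_deriv:
  fixes h h' :: "real \<Rightarrow> 'a::euclidean_space"
  assumes d: "\<And>x. (h has_vector_derivative h' x) (at x)" and c: "continuous_on UNIV h'"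
    and ih: "integrable lborel h" and ih': "integrable lborel h'"
  shows "(h \<longlongrightarrow> 0) at_top"
proof -
  have "((\<lambda>b. h 0 + (LBINT x:{0..b}. h' x)) \<longlongrightarrow> h 0 + (LBINT x:{0..}. h' x)) at_top"
    using ih' by (intro tendsto_intros tendsto_set_lebesgue_integral_at_top)
      (auto simp: set_integrable_def intro: integrable_mult_indicator)
  moreover have "eventually (\<lambda>b. h 0 + (LBINT x:{0..b}. h' x) = h b) at_top"
    using eventually_ge_at_top[of 0]
  proof eventually_elim
    case (elim b)
    have "(LBINT x=ereal 0..ereal b. h' x) = h b - h 0"
      by (rule interval_integral_FTC_finite)
        (auto intro: continuous_on_subset[OF c] has_vector_derivative_at_within[OF d])
    with elim show ?case by (simp add: interval_integral_Icc)
  qed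
  ultimately have "(h \<longlongrightarrow> h 0 + (LBINT x:{0..}. h' x)) at_top"
    by (rule Lim_transform_eventually)
  with integrable_tendsto_at_top_imp_0[OF ih] show ?thesis by metis
qed

lemma tendsto_0_at_bot_if_integrable_deriv:
  fixes h h' :: "real \<Rightarrow> 'a::euclidean_space"
  assumes d: "\<And>x. (h has_vector_derivative h' x) (at x)" and c: "continuous_on UNIV h'"
    and ih: "integrable lborel h" and ih': "integrable lborel h'"
  shows "(h \<longlongrightarrow> 0) at_bot"
proof -
  have "((\<lambda>x. h (- x)) \<longlongrightarrow> 0) at_top"
  proof (rule tendsto_0_at_top_if_integrable_deriv)
    show "((\<lambda>x. h (- x)) has_vector_derivative - h' (- x)) (at x)" for x
      using vector_diff_chain_at[OF has_vector_derivative_minus[OF has_vector_derivative_id] d]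
      by (simp add: o_def)
    show "continuous_on UNIV (\<lambda>x. - h' (- x))"
      by (intro continuous_intros continuous_on_compose2[OF c]) auto
    show "integrable lborel (\<lambda>x. h (- x))"
      using lborel_integrable_real_affine[OF ih, of "-1" 0] by simp
    show "integrable lborel (\<lambda>x. - h' (- x))"
      using lborel_integrable_real_affine[OF ih', of "-1" 0] by simp
  qed
  from filterlim_compose[OF this filterlim_uminus_at_top_at_bot] show ?thesis by simp
qed

lemma integral_deriv_eq_0:
  fixes h h' :: "real \<Rightarrow> 'a::euclidean_space"
  assumes d: "\<And>x. (h has_vector_derivative h' x) (at x)" and c: "continuous_on UNIV h'"
    and ih: "integrable lborel h" and ih': "integrable lborel h'"
  shows "(\<integral>x. h' x \<partial>lborel) = 0"
proof -
  have "(LBINT x=-\<infinity>..\<infinity>. h' x) = 0 - 0"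
  proof (rule interval_integral_FTC_integrable)
    show "((h \<circ> real_of_ereal) \<longlongrightarrow> 0) (at_right (-\<infinity>))"
      using tendsto_0_at_bot_if_integrable_deriv[OF assms] by (simp add: ereal_tendsto_simps)
    show "((h \<circ> real_of_ereal) \<longlongrightarrow> 0) (at_left \<infinity>)"
      using tendsto_0_at_top_if_integrable_deriv[OF assms] by (simp add: ereal_tendsto_simps)
  qed (use d c ih' in \<open>auto simp: continuous_on_eq_continuous_at set_integrable_def\<close>)
  then show ?thesis
    by (simp add: interval_lebesgue_integral_def set_lebesgue_integral_def)
qed

lemma continuous_on_integral_param:
  fixes f :: "real \<Rightarrow> real \<Rightarrow> 'a::{banach, second_countable_topology}"
  assumes mf: "\<And>s. f s \<in> borel_measurable lborel"
    and w: "integrable lborel w"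
    and c: "\<And>t. continuous_on UNIV (\<lambda>s. f s t)"
    and bd: "\<And>s t. norm (f s t) \<le> w t"
  shows "continuous_on UNIV (\<lambda>s. \<integral>t. f s t \<partial>lborel)"
  unfolding continuous_on_eq_continuous_at[OF open_UNIV]
proof (intro ballI continuous_at_sequentiallyI)
  fix x and u :: "nat \<Rightarrow> real" assume u: "u \<longlonglongrightarrow> x"
  show "(\<lambda>n. \<integral>t. f (u n) t \<partial>lborel) \<longlonglongrightarrow> (\<integral>t. f x t \<partial>lborel)"
  proof (rule integral_dominated_convergence[where w=w])
    show "AE t in lborel. (\<lambda>n. f (u n) t) \<longlonglongrightarrow> f x t"
      using c u by (intro AE_I2 isCont_tendsto_compose[OF _ u])
        (simp add: continuous_on_eq_continuous_at)
  qed (use mf w bd in auto)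
qed

lemma tendsto_integral_derivative_remainder:
  fixes f f' :: "real \<Rightarrow> real \<Rightarrow> 'a::{banach, second_countable_topology}"
  assumes mf: "\<And>s. f s \<in> borel_measurable lborel" and mf': "\<And>s. f' s \<in> borel_measurable lborel"
    and w: "integrable lborel w"
    and der: "\<And>s t. ((\<lambda>s. f s t) has_vector_derivative f' s t) (at s)"
    and lip: "\<And>s s' t. norm (f s t - f s' t) \<le> \<bar>s - s'\<bar> * w t"
    and bd: "\<And>s t. norm (f' s t) \<le> w t"
  shows "((\<lambda>y. \<integral>t. norm (f y t - f x t - (y - x) *\<^sub>R f' x t) / \<bar>y - x\<bar> \<partial>lborel) \<longlongrightarrow> 0) (at x)"
  unfolding tendsto_at_iff_sequentially comp_def
proof (intro allI impI)
  define q where "q y t = norm (f y t - f x t - (y - x) *\<^sub>R f' x t) / \<bar>y - x\<bar>" for y t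
  fix X :: "nat \<Rightarrow> real" assume X: "\<forall>i. X i \<in> UNIV - {x}" "X \<longlonglongrightarrow> x"
  have "(\<lambda>n. \<integral>t. q (X n) t \<partial>lborel) \<longlonglongrightarrow> (\<integral>t. 0 \<partial>(lborel :: real measure))"
  proof (rule integral_dominated_convergence[where w="\<lambda>t. 2 * w t"])
    show "(\<lambda>t. q (X n) t) \<in> borel_measurable lborel" for n
      unfolding q_def using mf[of "X n"] mf[of x] mf'[of x] by measurable
    show "AE t in lborel. (\<lambda>n. q (X n) t) \<longlonglongrightarrow> 0"
    proof (rule AE_I2)
      fix t
      have "((\<lambda>y. q y t) \<longlongrightarrow> 0) (at x)"
        using der[of t x] unfolding has_vector_derivative_def has_derivative_iff_norm q_def
        by simp
      then show "(\<lambda>n. q (X n) t) \<longlonglongrightarrow> 0"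
        using X unfolding tendsto_at_iff_sequentially comp_def by auto
    qed
    show "AE t in lborel. norm (q (X n) t) \<le> 2 * w t" for n
    proof (rule AE_I2)
      fix t
      have "norm (f (X n) t - f x t - (X n - x) *\<^sub>R f' x t) \<le> \<bar>X n - x\<bar> * w t + \<bar>X n - x\<bar> * w t"
        by (rule order_trans[OF norm_triangle_ineq4], rule add_mono[OF lip])
          (simp add: bd mult_left_mono)
      moreover have "\<bar>X n - x\<bar> > 0" using X by auto
      ultimately show "norm (q (X n) t) \<le> 2 * w t"
        unfolding q_def by (simp add: divide_le_eq algebra_simps)
    qed
  qed (use w in auto)
  then show "(\<lambda>n. \<integral>t. norm (f (X n) t - f x t - (X n - x) *\<^sub>R f' x t) / \<bar>X n - x\<bar> \<partial>lborel) \<longlonglongrightarrow> 0"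
    by (simp add: q_def)
qed

lemma has_vector_derivative_integral_param:
  fixes f f' :: "real \<Rightarrow> real \<Rightarrow> 'a::{banach, second_countable_topology}"
  assumes mf: "\<And>s. f s \<in> borel_measurable lborel" and mf': "\<And>s. f' s \<in> borel_measurable lborel"
    and fi: "\<And>s. integrable lborel (f s)"
    and w: "integrable lborel w"
    and der: "\<And>s t. ((\<lambda>s. f s t) has_vector_derivative f' s t) (at s)"
    and lip: "\<And>s s' t. norm (f s t - f s' t) \<le> \<bar>s - s'\<bar> * w t"
    and bd: "\<And>s t. norm (f' s t) \<le> w t"
  shows "((\<lambda>s. \<integral>t. f s t \<partial>lborel) has_vector_derivative (\<integral>t. f' x t \<partial>lborel)) (at x)"
proof -
  have fi': "integrable lborel (f' s)" for s
    by (rule Bochner_Integration.integrable_bound[OF w mf']) (auto intro: order_trans[OF bd abs_ge_self])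
  have "((\<lambda>y. norm ((\<integral>t. f y t \<partial>lborel) - (\<integral>t. f x t \<partial>lborel) - (y - x) *\<^sub>R (\<integral>t. f' x t \<partial>lborel))
      / \<bar>y - x\<bar>) \<longlongrightarrow> 0) (at x)"
  proof (rule Lim_null_comparison[OF always_eventually
        tendsto_integral_derivative_remainder[OF mf mf' w der lip bd]], intro allI)
    fix y
    have "(\<integral>t. f y t \<partial>lborel) - (\<integral>t. f x t \<partial>lborel) - (y - x) *\<^sub>R (\<integral>t. f' x t \<partial>lborel)
        = (\<integral>t. f y t - f x t - (y - x) *\<^sub>R f' x t \<partial>lborel)"
      using fi[of y] fi[of x] fi'[of x] by simp
    then have "norm ((\<integral>t. f y t \<partial>lborel) - (\<integral>t. f x t \<partial>lborel) - (y - x) *\<^sub>R (\<integral>t. f' x t \<partial>lborel))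
        \<le> (\<integral>t. norm (f y t - f x t - (y - x) *\<^sub>R f' x t) \<partial>lborel)"
      by (simp add: integral_norm_bound)
    then show "norm (norm ((\<integral>t. f y t \<partial>lborel) - (\<integral>t. f x t \<partial>lborel) - (y - x) *\<^sub>R (\<integral>t. f' x t \<partial>lborel))
        / \<bar>y - x\<bar>) \<le> (\<integral>t. norm (f y t - f x t - (y - x) *\<^sub>R f' x t) / \<bar>y - x\<bar> \<partial>lborel)"
      by (simp add: divide_right_mono)
  qed
  then show ?thesis
    unfolding has_vector_derivative_def has_derivative_iff_norm
    by (simp add: bounded_linear_scaleR_left)
qed

lemma integrable_product_lborel:
  fixes a b :: "real \<Rightarrow> real"
  assumes a: "integrable lborel a" and b: "integrable lborel b"
  shows "integrable (lborel \<Otimes>\<^sub>M lborel) (\<lambda>p. a (fst p) * b (snd p))"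
proof (rule lborel_pair.Fubini_integrable)
  have [measurable]: "a \<in> borel_measurable lborel" "b \<in> borel_measurable lborel"
    using a b by auto
  show "(\<lambda>p. a (fst p) * b (snd p)) \<in> borel_measurable (lborel \<Otimes>\<^sub>M lborel)"
    by measurable
  show "integrable lborel (\<lambda>x. \<integral>y. norm (a (fst (x, y)) * b (snd (x, y))) \<partial>lborel)"
    using a by (simp add: abs_mult)
  show "AE x in lborel. integrable lborel (\<lambda>y. a (fst (x, y)) * b (snd (x, y)))"
    using b by simp
qed

lemma integrable_shear_product_lborel:
  fixes a b :: "real \<Rightarrow> real"
  assumes a: "integrable lborel a" and b: "integrable lborel b"
  shows "integrable (lborel \<Otimes>\<^sub>M lborel) (\<lambda>p. a (fst p) * b (fst p + snd p))"
proof (rule lborel_pair.Fubini_integrable)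
  have [measurable]: "a \<in> borel_measurable lborel" "b \<in> borel_measurable lborel"
    using a b by auto
  show "(\<lambda>p. a (fst p) * b (fst p + snd p)) \<in> borel_measurable (lborel \<Otimes>\<^sub>M lborel)"
    by measurable
  have "(\<integral>y. \<bar>b (x + y)\<bar> \<partial>lborel) = (\<integral>y. \<bar>b y\<bar> \<partial>lborel)" for x
    using lborel_integral_real_affine[of 1 "\<lambda>y. \<bar>b y\<bar>" x] by simp
  then show "integrable lborel (\<lambda>x. \<integral>y. norm (a (fst (x, y)) * b (fst (x, y) + snd (x, y))) \<partial>lborel)"
    using a by (simp add: abs_mult)
  show "AE x in lborel. integrable lborel (\<lambda>y. a (fst (x, y)) * b (fst (x, y) + snd (x, y)))"
    using lborel_integrable_real_affine[OF b, of 1] by simp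
qed

lemma
  assumes "s \<noteq> 0"
  shows integrable_inverse_1_plus_square_scaled: "integrable lborel (\<lambda>t. inverse (1 + (s * t)^2))"
    and integral_inverse_1_plus_square_scaled: "(\<integral>t. inverse (1 + (s * t)^2) \<partial>lborel) = pi / \<bar>s\<bar>"
proof -
  have i: "integrable lborel (\<lambda>x::real. inverse (1 + x^2))"
    using integrable_inverse_1_plus_square by (simp add: set_integrable_def)
  have "(\<integral>x. inverse (1 + x^2) \<partial>lborel) = pi"
    using LBINT_inverse_1_plus_square
    by (simp add: interval_lebesgue_integral_def set_lebesgue_integral_def)
  then have "pi = \<bar>s\<bar> * (\<integral>t. inverse (1 + (s * t)^2) \<partial>lborel)"
    using lborel_integral_real_affine[OF assms, of "\<lambda>x. inverse (1 + x^2)" 0] by simp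
  then show "(\<integral>t. inverse (1 + (s * t)^2) \<partial>lborel) = pi / \<bar>s\<bar>"
    using assms by (simp add: field_simps)
  show "integrable lborel (\<lambda>t. inverse (1 + (s * t)^2))"
    using lborel_integrable_real_affine[OF i assms, of 0] by simp
qed

lemma norm_exp_minus_ii: "norm (exp (- \<i> * complex_of_real a)) = 1"
  by (metis norm_exp_i_times of_real_minus mult_minus_left mult_minus_right)

lemma norm_exp_ii_diff_le: "norm (exp (\<i> * of_real a) - exp (\<i> * of_real b)) \<le> \<bar>a - b\<bar>"
proof -
  have "exp (\<i> * of_real a) - exp (\<i> * of_real b) = exp (\<i> * of_real b) * (exp (\<i> * of_real (a - b)) - 1)"
    by (simp add: algebra_simps exp_add[symmetric])
  also have "norm \<dots> = norm (exp (\<i> * of_real (a - b)) - 1)"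
    by (simp add: norm_mult norm_exp_i_times)
  also have "\<dots> \<le> \<bar>a - b\<bar>"
    using iexp_approx1[of "a - b" 0] by simp
  finally show ?thesis .
qed

section \<open>Functions with finite second tail moment\<close>

definition tail_moment2 :: "(real \<Rightarrow> complex) \<Rightarrow> bool" where
  "tail_moment2 g \<longleftrightarrow> set_integrable lborel {t. 1 < \<bar>t\<bar>} (\<lambda>t. complex_of_real (t^2) * g t)"

lemma integrable_power_mult_if_tail_moment2:
  fixes g :: "real \<Rightarrow> complex"
  assumes c: "continuous_on UNIV g" and g: "tail_moment2 g" and k: "k \<le> 2"
  shows "integrable lborel (\<lambda>t. complex_of_real (t^k) * g t)"
proof -
  have [measurable]: "g \<in> borel_measurable lborel"
    using c by (simp add: borel_measurable_continuous_onI)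
  let ?h = "\<lambda>t. complex_of_real (t^k) * g t"
  have "set_integrable lborel {-1..1} ?h"
    by (rule borel_integrable_atLeastAtMost') (intro continuous_intros continuous_on_subset[OF c]; simp)
  moreover have "set_integrable lborel {t. 1 < \<bar>t\<bar>} ?h"
    unfolding set_integrable_def
  proof (rule Bochner_Integration.integrable_bound)
    show "integrable lborel (\<lambda>t. indicator {t. 1 < \<bar>t\<bar>} t *\<^sub>R (complex_of_real (t^2) * g t))"
      using g unfolding tail_moment2_def set_integrable_def .
    have "\<bar>t\<bar>^k \<le> \<bar>t\<bar>^2" if "1 < \<bar>t\<bar>" for t :: real
      by (rule power_increasing) (use that k in auto)
    then show "AE t in lborel. norm (indicator {t. 1 < \<bar>t\<bar>} t *\<^sub>R ?h t)
        \<le> norm (indicator {t. 1 < \<bar>t\<bar>} t *\<^sub>R (complex_of_real (t^2) * g t))"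
      by (intro AE_I2) (auto simp: norm_mult norm_power mult_right_mono split: split_indicator)
  qed measurable
  ultimately have "set_integrable lborel ({-1..1} \<union> {t. 1 < \<bar>t\<bar>}) ?h"
    by (rule set_integrable_Un) auto
  moreover have "{-1..1} \<union> {t::real. 1 < \<bar>t\<bar>} = UNIV" by auto
  ultimately show ?thesis by (simp add: set_integrable_def)
qed

lemma integrable_abs_power_mult_norm_if_tail_moment2:
  fixes g :: "real \<Rightarrow> complex"
  assumes "continuous_on UNIV g" "tail_moment2 g" "k \<le> 2"
  shows "integrable lborel (\<lambda>t. \<bar>t\<bar>^k * norm (g t))"
  using integrable_norm[OF integrable_power_mult_if_tail_moment2[OF assms]]
  by (simp add: norm_mult norm_power)

lemma integrable_mult_if_affine_bound:
  fixes k g :: "real \<Rightarrow> complex"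
  assumes k: "continuous_on UNIV k" and kb: "\<And>s. norm (k s) \<le> A + B * \<bar>s\<bar>"
    and g: "continuous_on UNIV g" "tail_moment2 g"
  shows "integrable lborel (\<lambda>s. k s * g s)"
proof (rule Bochner_Integration.integrable_bound)
  show "integrable lborel (\<lambda>s. A * norm (g s) + B * (\<bar>s\<bar> * norm (g s)))"
    using integrable_abs_power_mult_norm_if_tail_moment2[OF g, of 0]
      integrable_abs_power_mult_norm_if_tail_moment2[OF g, of 1]
    by (auto intro!: Bochner_Integration.integrable_add integrable_mult_right)
  show "(\<lambda>s. k s * g s) \<in> borel_measurable lborel"
    using k g by (simp add: borel_measurable_continuous_onI continuous_on_mult)
  have "norm (k s * g s) \<le> A * norm (g s) + B * (\<bar>s\<bar> * norm (g s))" for s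
    using mult_right_mono[OF kb norm_ge_zero, of s "g s"] by (simp add: norm_mult algebra_simps)
  then show "AE s in lborel. norm (k s * g s) \<le> norm (A * norm (g s) + B * (\<bar>s\<bar> * norm (g s)))"
    by (auto intro: order_trans[OF _ abs_ge_self])
qed

lemma tail_moment2_bounded_mult:
  fixes g M :: "real \<Rightarrow> complex"
  assumes g: "tail_moment2 g" "continuous_on UNIV g"
    and M: "continuous_on UNIV M" "bounded (range M)"
  shows "tail_moment2 (\<lambda>t. M t * g t)"
proof -
  obtain C where C: "\<And>t. norm (M t) \<le> C"
    using M(2) by (auto simp: bounded_iff)
  have [measurable]: "g \<in> borel_measurable lborel" "M \<in> borel_measurable lborel"
    using g(2) M(1) by (simp_all add: borel_measurable_continuous_onI)
  have "t^2 * (norm (M t) * norm (g t)) \<le> C * (t^2 * norm (g t))" for t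
    using mult_right_mono[OF C[of t], of "t^2 * norm (g t)"] by (simp add: algebra_simps)
  moreover have "0 \<le> C" using C[of 0] norm_ge_zero order_trans by blast
  ultimately have ae: "AE t in lborel. norm (indicator {t. 1 < \<bar>t\<bar>} t *\<^sub>R (of_real (t^2) * (M t * g t)))
      \<le> norm (C * norm (indicator {t. 1 < \<bar>t\<bar>} t *\<^sub>R (of_real (t^2) * g t)))"
    by (intro AE_I2) (auto simp: norm_mult norm_power split: split_indicator)
  have int: "integrable lborel (\<lambda>t. C * norm (indicator {t. 1 < \<bar>t\<bar>} t *\<^sub>R (of_real (t^2) * g t)))"
    using g unfolding tail_moment2_def set_integrable_def by (intro integrable_mult_right integrable_norm)
  have "(\<lambda>t. indicator {t. 1 < \<bar>t\<bar>} t *\<^sub>R (of_real (t^2) * (M t * g t))) \<in> borel_measurable lborel"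
    by measurable
  from Bochner_Integration.integrable_bound[OF int this ae] show ?thesis
    unfolding tail_moment2_def set_integrable_def .
qed

lemma tail_moment2_add:
  "tail_moment2 a \<Longrightarrow> tail_moment2 b \<Longrightarrow> tail_moment2 (\<lambda>t. a t + b t)"
  unfolding tail_moment2_def set_integrable_def
  by (drule (1) Bochner_Integration.integrable_add) (simp add: algebra_simps scaleR_add_right)

definition C2_moment2 :: "(real \<Rightarrow> complex) \<Rightarrow> (real \<Rightarrow> complex) \<Rightarrow> (real \<Rightarrow> complex) \<Rightarrow> bool" where
  "C2_moment2 \<phi> \<phi>' \<phi>'' \<longleftrightarrow>
     (\<forall>t. (\<phi> has_vector_derivative \<phi>' t) (at t)) \<and> (\<forall>t. (\<phi>' has_vector_derivative \<phi>'' t) (at t)) \<and>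
     continuous_on UNIV \<phi>'' \<and> tail_moment2 \<phi> \<and> tail_moment2 \<phi>' \<and> tail_moment2 \<phi>''"

lemma
  assumes "C2_moment2 \<phi> \<phi>' \<phi>''"
  shows C2_moment2_deriv: "\<And>t. (\<phi> has_vector_derivative \<phi>' t) (at t)"
    and C2_moment2_deriv2: "\<And>t. (\<phi>' has_vector_derivative \<phi>'' t) (at t)"
    and C2_moment2_continuous: "continuous_on UNIV \<phi>" "continuous_on UNIV \<phi>'" "continuous_on UNIV \<phi>''"
    and C2_moment2_tail: "tail_moment2 \<phi>" "tail_moment2 \<phi>'" "tail_moment2 \<phi>''"
  using assms unfolding C2_moment2_def
  by (auto intro!: continuous_on_vector_derivative simp: has_vector_derivative_at_within)

section \<open>The kernel \<open>\<partial>v\<^sub>s/\<partial>t\<close>\<close>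

text \<open>At \<open>t = 0\<close> the formula gives \<open>0\<close> (division by zero), not the derivative; this is harmless,
  because every use of \<open>dvs\<close> below either assumes \<open>t \<noteq> 0\<close> or integrates over \<open>t\<close>.\<close>

definition dvs :: "real \<Rightarrow> real \<Rightarrow> complex" where
  "dvs s t = (\<i> * of_real s * (1 + exp (- \<i> * of_real (s * t)))
      - 2 * (1 - exp (- \<i> * of_real (s * t))) / of_real t) / of_real (t^2)"

lemma has_vector_derivative_vs:
  assumes t: "t \<noteq> 0"
  shows "(vs s has_vector_derivative dvs s t) (at t)"
proof -
  define V where "V z = (1 - \<i> * of_real s * z - exp (- \<i> * of_real s * z)) / z^2" for z :: complex
  define D where "D = ((- \<i> * of_real s + \<i> * of_real s * exp (- \<i> * of_real s * of_real t)) * (of_real t)^2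
        - (1 - \<i> * of_real s * of_real t - exp (- \<i> * of_real s * of_real t)) * (2 * of_real t))
        / ((of_real t)^2)^2"
  have z: "complex_of_real t \<noteq> 0" using t by simp
  have "(V has_field_derivative D) (at (of_real t))"
    unfolding V_def D_def by (rule derivative_eq_intros refl | use z in simp)+
  then have "((\<lambda>x. V (of_real x)) has_vector_derivative D) (at t)"
    by (rule has_vector_derivative_real_field)
  moreover have "D = dvs s t"
    unfolding D_def dvs_def using z by (simp add: field_simps power2_eq_square)
  ultimately have V': "((\<lambda>x. V (of_real x)) has_vector_derivative dvs s t) (at t)" by simp
  have "V (of_real y) = vs s y" if "y \<in> - {0}" for y
    using that unfolding vs_def V_def by (simp add: mult.assoc)
  then show ?thesis
    by (intro has_vector_derivative_transform_within_open[OF V', of "- {0}"]) (use t in auto)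
qed

lemma vs_tendsto_0: "(vs s \<longlongrightarrow> 0) at_top"
proof (rule Lim_null_comparison)
  show "\<forall>\<^sub>F t in at_top. norm (vs s t) \<le> 2 / t^2 + \<bar>s\<bar> / t"
    using eventually_gt_at_top[of 0]
  proof eventually_elim
    case (elim t)
    have "norm (1 - \<i> * of_real (s * t) - exp (- \<i> * of_real (s * t))) \<le> 1 + \<bar>s * t\<bar> + 1"
      by (rule order_trans[OF norm_triangle_ineq4] order_trans[OF norm_triangle_ineq4] add_mono)+
        (auto simp: norm_mult norm_exp_minus_ii)
    then have "norm (vs s t) \<le> (2 + \<bar>s\<bar> * t) / t^2"
      using elim by (simp add: vs_def norm_divide norm_power abs_mult divide_right_mono)
    also have "\<dots> = 2 / t^2 + \<bar>s\<bar> / t"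
      using elim by (simp add: field_simps power2_eq_square)
    finally show ?case .
  qed
  have "((\<lambda>t::real. 2 / t^2) \<longlongrightarrow> 0) at_top"
    by (intro tendsto_divide_0[OF tendsto_const] filterlim_at_top_imp_at_infinity
        filterlim_pow_at_top filterlim_ident) simp
  moreover have "((\<lambda>t::real. \<bar>s\<bar> / t) \<longlongrightarrow> 0) at_top"
    by (intro tendsto_divide_0[OF tendsto_const] filterlim_at_top_imp_at_infinity filterlim_ident)
  ultimately have "((\<lambda>t. 2 / t^2 + \<bar>s\<bar> / t) \<longlongrightarrow> 0 + 0) at_top"
    by (rule tendsto_add)
  then show "((\<lambda>t. 2 / t^2 + \<bar>s\<bar> / t) \<longlongrightarrow> 0) at_top" by simp
qed

lemma Omega_eq_integral_dvs: "Omega F s = - (\<integral>t. F t * dvs s t \<partial>lborel)"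
proof -
  have "Lim at_top (vs s) = 0"
    using vs_tendsto_0 by (rule tendsto_Lim[rotated]) simp
  moreover have "(\<integral>t. F t * vector_derivative (vs s) (at t) \<partial>lborel) = (\<integral>t. F t * dvs s t \<partial>lborel)"
    by (rule integral_discrete_difference[where X="{0}"])
      (auto simp: vector_derivative_at[OF has_vector_derivative_vs])
  ultimately show ?thesis unfolding Omega_def Ac_int_def by simp
qed

definition dvs_numer :: "real \<Rightarrow> complex" where
  "dvs_numer a = \<i> * of_real a * (1 + exp (- \<i> * of_real a)) - 2 * (1 - exp (- \<i> * of_real a))"

lemma dvs_eq_numer: "t \<noteq> 0 \<Longrightarrow> dvs s t = dvs_numer (s * t) / of_real (t^3)"
  unfolding dvs_def dvs_numer_def by (simp add: field_simps power2_eq_square power3_eq_cube)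

lemma norm_dvs_numer_le_cube: "norm (dvs_numer a) \<le> \<bar>a\<bar>^3"
proof -
  define e where "e = exp (- \<i> * of_real a)"
  have e: "e = iexp (-a)" unfolding e_def by simp
  have 1: "norm (e - (1 - \<i> * of_real a)) \<le> a^2 / 2"
    using iexp_approx1[of "-a" 1] unfolding e by (simp add: power2_eq_square)
  have "(\<Sum>k\<le>Suc (Suc 0). (\<i> * of_real (-a))^k / fact k) = 1 - \<i> * of_real a - of_real (a^2) / 2"
    by (simp add: power2_eq_square algebra_simps)
  then have 2: "norm (e - (1 - \<i> * of_real a - of_real (a^2) / 2)) \<le> \<bar>a\<bar>^3 / 6"
    using iexp_approx1[of "-a" "Suc (Suc 0)"] unfolding e by (simp add: numeral_3_eq_3)
  \<comment> \<open>a combination of the Taylor remainders of orders 1 and 2 of \<open>exp (- i a)\<close>\<close>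
  have "dvs_numer a = \<i> * of_real a * (e - (1 - \<i> * of_real a))
      + 2 * (e - (1 - \<i> * of_real a - of_real (a^2) / 2))"
    unfolding dvs_numer_def e_def by (simp add: algebra_simps power2_eq_square)
  also have "norm \<dots> \<le> \<bar>a\<bar> * (a^2 / 2) + 2 * (\<bar>a\<bar>^3 / 6)"
  proof (rule order_trans[OF norm_triangle_ineq], rule add_mono)
    show "norm (\<i> * of_real a * (e - (1 - \<i> * of_real a))) \<le> \<bar>a\<bar> * (a^2 / 2)"
      unfolding norm_mult using mult_left_mono[OF 1 abs_ge_zero[of a]] by simp
    show "norm (2 * (e - (1 - \<i> * of_real a - of_real (a^2) / 2))) \<le> 2 * (\<bar>a\<bar>^3 / 6)"
      unfolding norm_mult using 2 by simp
  qed
  also have "\<dots> = 5/6 * \<bar>a\<bar>^3"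
    by (subst power2_abs[symmetric]) (simp add: power2_eq_square power3_eq_cube)
  finally show ?thesis using zero_le_power[OF abs_ge_zero, of a 3] by linarith
qed

lemma norm_dvs_numer_le_linear: "norm (dvs_numer a) \<le> 2 * \<bar>a\<bar> + 4"
proof -
  have "norm (dvs_numer a)
      \<le> norm (\<i> * of_real a * (1 + exp (- \<i> * of_real a))) + norm (2 * (1 - exp (- \<i> * of_real a)))"
    unfolding dvs_numer_def by (rule norm_triangle_ineq4)
  also have "\<dots> \<le> \<bar>a\<bar> * 2 + 2 * 2"
    by (intro add_mono) (auto simp: norm_mult norm_exp_minus_ii intro!: mult_left_mono
        order_trans[OF norm_triangle_ineq] order_trans[OF norm_triangle_ineq4])
  finally show ?thesis by simp
qed

lemma norm_dvs_numer_mult_le: "norm (dvs_numer a) * (1 + a^2) \<le> 6 * \<bar>a\<bar>^3"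
proof (cases "\<bar>a\<bar> \<le> 2")
  case True
  then have "a^2 \<le> 2^2" by (metis abs_le_square_iff abs_numeral)
  then have "norm (dvs_numer a) * (1 + a^2) \<le> \<bar>a\<bar>^3 * 5"
    by (intro mult_mono[OF norm_dvs_numer_le_cube]) auto
  then show ?thesis using zero_le_power[OF abs_ge_zero, of a 3] by linarith
next
  case False
  then have "norm (dvs_numer a) * (1 + a^2) \<le> (4 * \<bar>a\<bar>) * (5/4 * a^2)"
    using norm_dvs_numer_le_linear[of a] abs_le_square_iff[of 2 a]
    by (intro mult_mono) (auto simp: power2_eq_square)
  also have "\<dots> = 5 * \<bar>a\<bar>^3"
    by (simp add: power2_eq_square power3_eq_cube abs_mult_self_eq)
  finally show ?thesis using zero_le_power[OF abs_ge_zero, of a 3] by linarith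
qed

lemma norm_dvs_le: "norm (dvs s t) \<le> 6 * \<bar>s\<bar>^3 / (1 + (s * t)^2)"
proof (cases "t = 0")
  case False
  have pos: "0 < 1 + (s * t)^2" by (simp add: add_pos_nonneg)
  have "norm (dvs s t) * (1 + (s * t)^2) = norm (dvs_numer (s * t)) * (1 + (s * t)^2) / \<bar>t\<bar>^3"
    using False by (simp add: dvs_eq_numer norm_divide norm_power)
  also have "\<dots> \<le> 6 * \<bar>s * t\<bar>^3 / \<bar>t\<bar>^3"
    by (intro divide_right_mono norm_dvs_numer_mult_le) simp
  also have "\<dots> = 6 * \<bar>s\<bar>^3"
    using False by (simp add: abs_mult power_mult_distrib)
  finally show ?thesis
    using pos by (simp add: le_divide_eq)
qed (simp add: dvs_def)

lemma norm_dvs_le_affine: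
  assumes "t \<noteq> 0"
  shows "norm (dvs s t) \<le> 4 / \<bar>t\<bar>^3 + 2 / t^2 * \<bar>s\<bar>"
proof -
  have "norm (dvs s t) \<le> (2 * \<bar>s * t\<bar> + 4) / \<bar>t\<bar>^3"
    using assms norm_dvs_numer_le_linear[of "s * t"]
    by (simp add: dvs_eq_numer norm_divide norm_power divide_right_mono)
  also have "\<dots> = 4 / \<bar>t\<bar>^3 + 2 / t^2 * \<bar>s\<bar>"
    using assms by (simp add: abs_mult field_simps power2_eq_square power3_eq_cube)
  finally show ?thesis .
qed

definition dvs_ds :: "real \<Rightarrow> real \<Rightarrow> complex" where
  "dvs_ds s t = \<i> / of_real (t^2) - \<i> * exp (- \<i> * of_real (s * t)) / of_real (t^2)
     + of_real s * exp (- \<i> * of_real (s * t)) / of_real t"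

lemma has_vector_derivative_dvs_freq:
  assumes "t \<noteq> 0"
  shows "((\<lambda>s. dvs s t) has_vector_derivative dvs_ds s t) (at s)"
proof -
  define T where "T = complex_of_real t"
  have T: "T \<noteq> 0" using assms by (simp add: T_def)
  define W where "W z = (\<i> * z * (1 + exp (- \<i> * (z * T))) - 2 * (1 - exp (- \<i> * (z * T))) / T) / T^2" for z
  have "(W has_field_derivative dvs_ds s t) (at (of_real s))"
    unfolding W_def using T
    by (auto intro!: derivative_eq_intros simp: dvs_ds_def T_def field_simps power2_eq_square)
  then have "((\<lambda>x. W (of_real x)) has_vector_derivative dvs_ds s t) (at s)"
    by (rule has_vector_derivative_real_field)
  moreover have "W (of_real x) = dvs x t" for x
    unfolding W_def dvs_def T_def by simp
  ultimately show ?thesis by simp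
qed

lemma has_vector_derivative_dvs_ds_freq:
  assumes "t \<noteq> 0"
  shows "((\<lambda>s. dvs_ds s t) has_vector_derivative - \<i> * of_real s * exp (- \<i> * of_real (s * t))) (at s)"
proof -
  define T where "T = complex_of_real t"
  have T: "T \<noteq> 0" using assms by (simp add: T_def)
  define W where "W z = \<i> / T^2 - \<i> * exp (- \<i> * (z * T)) / T^2 + z * exp (- \<i> * (z * T)) / T" for z
  have "(W has_field_derivative - \<i> * of_real s * exp (- \<i> * of_real (s * t))) (at (of_real s))"
    unfolding W_def using T
    by (auto intro!: derivative_eq_intros simp: T_def field_simps power2_eq_square)
  then have "((\<lambda>x. W (of_real x)) has_vector_derivative - \<i> * of_real s * exp (- \<i> * of_real (s * t))) (at s)"
    by (rule has_vector_derivative_real_field)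
  moreover have "W (of_real x) = dvs_ds x t" for x
    unfolding W_def dvs_ds_def T_def by simp
  ultimately show ?thesis by simp
qed

lemma norm_dvs_ds_le_affine:
  assumes "t \<noteq> 0"
  shows "norm (dvs_ds s t) \<le> 2 / t^2 + 1 / \<bar>t\<bar> * \<bar>s\<bar>"
proof -
  have "norm (dvs_ds s t) \<le> 1 / t^2 + 1 / t^2 + \<bar>s\<bar> / \<bar>t\<bar>"
    unfolding dvs_ds_def
    by (intro order_trans[OF norm_triangle_ineq] add_mono order_trans[OF norm_triangle_ineq4])
      (simp_all add: norm_divide norm_mult norm_power norm_exp_minus_ii)
  then show ?thesis by simp
qed

lemma continuous_on_dvs_freq: "t \<noteq> 0 \<Longrightarrow> continuous_on UNIV (\<lambda>s. dvs s t)"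
  by (rule continuous_on_vector_derivative, rule has_vector_derivative_at_within,
      rule has_vector_derivative_dvs_freq)

lemma continuous_on_dvs_ds_freq: "t \<noteq> 0 \<Longrightarrow> continuous_on UNIV (\<lambda>s. dvs_ds s t)"
  by (rule continuous_on_vector_derivative, rule has_vector_derivative_at_within,
      rule has_vector_derivative_dvs_ds_freq)

lemma
  assumes "t \<noteq> 0" "continuous_on UNIV g" "tail_moment2 g"
  shows integrable_dvs_mult: "integrable lborel (\<lambda>s. dvs s t * g s)"
    and integrable_dvs_ds_mult: "integrable lborel (\<lambda>s. dvs_ds s t * g s)"
  using assms
  by (auto intro!: integrable_mult_if_affine_bound continuous_on_dvs_freq continuous_on_dvs_ds_freq
      norm_dvs_le_affine norm_dvs_ds_le_affine)

section \<open>Pairing the Fourier transform of \<open>f\<close> with a test function\<close>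

lemma integral_second_deriv_mult_dvs:
  assumes \<phi>: "C2_moment2 \<phi> \<phi>' \<phi>''" and t: "t \<noteq> 0"
  shows "(\<integral>s. \<phi>'' s * dvs s t \<partial>lborel) = - FT (\<lambda>s. \<i> * of_real s * \<phi> s) t"
proof -
  note cont = C2_moment2_continuous[OF \<phi>] and tail = C2_moment2_tail[OF \<phi>]
  define E where "E s = exp (- \<i> * of_real (s * t)) * (\<i> * of_real s)" for s
  have cE: "continuous_on UNIV E" unfolding E_def by (intro continuous_intros)
  have nE: "norm (E s) \<le> 0 + 1 * \<bar>s\<bar>" for s
    by (simp add: E_def norm_mult norm_exp_minus_ii)
  \<comment> \<open>\<open>h\<close> is the boundary term of integrating by parts twice in \<open>s\<close>\<close>
  define h where "h s = \<phi>' s * dvs s t - \<phi> s * dvs_ds s t" for s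
  define h' where "h' s = \<phi>'' s * dvs s t + E s * \<phi> s" for s
  have "(h has_vector_derivative h' s) (at s)" for s
  proof -
    have "(h has_vector_derivative (\<phi>' s * dvs_ds s t + \<phi>'' s * dvs s t)
        - (\<phi> s * (- \<i> * of_real s * exp (- \<i> * of_real (s * t))) + \<phi>' s * dvs_ds s t)) (at s)"
      unfolding h_def
      by (intro has_vector_derivative_diff has_vector_derivative_mult C2_moment2_deriv[OF \<phi>]
          C2_moment2_deriv2[OF \<phi>] has_vector_derivative_dvs_freq[OF t]
          has_vector_derivative_dvs_ds_freq[OF t])
    then show ?thesis by (simp add: h'_def E_def algebra_simps)
  qed
  moreover have "continuous_on UNIV h'"
    unfolding h'_def by (intro continuous_intros cont continuous_on_dvs_freq[OF t] cE)
  moreover have "integrable lborel h"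
    using integrable_dvs_mult[OF t cont(2) tail(2)] integrable_dvs_ds_mult[OF t cont(1) tail(1)]
    unfolding h_def by (simp add: mult.commute)
  moreover have i1: "integrable lborel (\<lambda>s. \<phi>'' s * dvs s t)"
    using integrable_dvs_mult[OF t cont(3) tail(3)] by (simp add: mult.commute)
  moreover have i2: "integrable lborel (\<lambda>s. E s * \<phi> s)"
    by (rule integrable_mult_if_affine_bound[OF cE nE cont(1) tail(1)])
  ultimately have "(\<integral>s. h' s \<partial>lborel) = 0"
    unfolding h'_def by (intro integral_deriv_eq_0) auto
  moreover have "(\<integral>s. E s * \<phi> s \<partial>lborel) = FT (\<lambda>s. \<i> * of_real s * \<phi> s) t"
    unfolding FT_def E_def by (simp add: mult_ac)
  ultimately show ?thesis
    unfolding h'_def using i1 i2 by (simp add: eq_neg_iff_add_eq_0)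
qed

lemma integrable_cube_mult_inverse_1_plus_square:
  fixes \<psi> :: "real \<Rightarrow> complex"
  assumes \<psi>: "\<psi> \<in> borel_measurable lborel" "integrable lborel (\<lambda>s. s^2 * norm (\<psi> s))"
  shows "integrable (lborel \<Otimes>\<^sub>M lborel) (\<lambda>(s, t). \<bar>s\<bar>^3 * norm (\<psi> s) * inverse (1 + (s * t)^2))"
    (is "integrable _ (\<lambda>(s, t). ?D s t)")
proof (rule lborel_pair.Fubini_integrable)
  show "(\<lambda>(s, t). ?D s t) \<in> borel_measurable (lborel \<Otimes>\<^sub>M lborel)"
    using \<psi>(1) by measurable
  \<comment> \<open>the \<open>t\<close>-integral of \<open>1 / (1 + (s t)^2)\<close> is \<open>\<pi> / |s|\<close>, which turns \<open>|s|^3\<close> into \<open>s^2\<close>\<close>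
  have eq: "(\<integral>t. norm (?D s t) \<partial>lborel) = pi * (s^2 * norm (\<psi> s))" for s
  proof (cases "s = 0")
    case False
    have "(\<integral>t. norm (?D s t) \<partial>lborel) = \<bar>s\<bar>^3 * norm (\<psi> s) * (\<integral>t. inverse (1 + (s * t)^2) \<partial>lborel)"
      by (simp add: add_pos_nonneg)
    also have "\<dots> = pi * (s^2 * norm (\<psi> s))"
      unfolding integral_inverse_1_plus_square_scaled[OF False] using False
      by (simp add: field_simps power2_eq_square power3_eq_cube abs_mult_self_eq)
    finally show ?thesis .
  qed simp
  show "integrable lborel (\<lambda>s. \<integral>t. norm ((\<lambda>(s, t). ?D s t) (s, t)) \<partial>lborel)"
    unfolding case_prod_conv eq using \<psi>(2) by simp
  show "AE s in lborel. integrable lborel (\<lambda>t. (\<lambda>(s, t). ?D s t) (s, t))"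
  proof (rule AE_I2)
    show "integrable lborel (\<lambda>t. (\<lambda>(s, t). ?D s t) (s, t))" for s
      by (cases "s = 0") (simp_all add: integrable_inverse_1_plus_square_scaled)
  qed
qed

lemma integrable_dvs_product:
  fixes H \<psi> :: "real \<Rightarrow> complex"
  assumes H: "H \<in> borel_measurable lborel" "\<And>t. norm (H t) \<le> B"
    and \<psi>: "\<psi> \<in> borel_measurable lborel" "integrable lborel (\<lambda>s. s^2 * norm (\<psi> s))"
  shows "integrable (lborel \<Otimes>\<^sub>M lborel) (\<lambda>(s, t). H t * dvs s t * \<psi> s)"
proof (rule Bochner_Integration.integrable_bound)
  show "integrable (lborel \<Otimes>\<^sub>M lborel)
      (\<lambda>p. 6 * B * (case p of (s, t) \<Rightarrow> \<bar>s\<bar>^3 * norm (\<psi> s) * inverse (1 + (s * t)^2)))"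
    by (intro integrable_mult_right integrable_cube_mult_inverse_1_plus_square \<psi>)
  have [measurable]: "(\<lambda>p. dvs (fst p) (snd p)) \<in> borel_measurable (lborel \<Otimes>\<^sub>M lborel)"
    unfolding dvs_def by (intro borel_measurable_divide borel_measurable_diff borel_measurable_times; measurable)
  show "(\<lambda>(s, t). H t * dvs s t * \<psi> s) \<in> borel_measurable (lborel \<Otimes>\<^sub>M lborel)"
    using H(1) \<psi>(1) by measurable
  have B: "0 \<le> B" using H(2)[of 0] norm_ge_zero order_trans by blast
  have "norm (H t * dvs s t * \<psi> s) \<le> B * (6 * \<bar>s\<bar>^3 / (1 + (s * t)^2)) * norm (\<psi> s)" for s t
    unfolding norm_mult by (intro mult_right_mono mult_mono H(2) norm_dvs_le B norm_ge_zero)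
  also have "\<dots> s t = 6 * B * (\<bar>s\<bar>^3 * norm (\<psi> s) * inverse (1 + (s * t)^2))" for s t
    by (simp add: field_simps)
  finally show "AE p in lborel \<Otimes>\<^sub>M lborel. norm ((\<lambda>(s, t). H t * dvs s t * \<psi> s) p)
      \<le> norm (6 * B * (case p of (s, t) \<Rightarrow> \<bar>s\<bar>^3 * norm (\<psi> s) * inverse (1 + (s * t)^2)))"
    by (intro AE_I2) (auto intro: order_trans[OF _ abs_ge_self] split: prod.split)
qed

lemma second_deriv_eqI:
  assumes "\<And>t. (\<phi> has_vector_derivative \<phi>' t) (at t)" "\<And>t. (\<phi>' has_vector_derivative \<phi>'' t) (at t)"
  shows "second_deriv \<phi> s = \<phi>'' s"
proof -
  have "(\<lambda>x. vector_derivative \<phi> (at x)) = \<phi>'"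
    using vector_derivative_at[OF assms(1)] by auto
  then show ?thesis
    unfolding second_deriv_def using vector_derivative_at[OF assms(2)] by simp
qed

lemma
  assumes \<phi>: "C2_moment2 \<phi> \<phi>' \<phi>''"
    and F: "F \<in> borel_measurable lborel" "\<And>t. norm (F t) \<le> B"
  shows integrable_dvs_C2_moment2: "integrable (lborel \<Otimes>\<^sub>M lborel) (\<lambda>(s, t). F t * dvs s t * \<phi>'' s)"
    and integral_dvs_C2_moment2:
      "t \<noteq> 0 \<Longrightarrow> (\<integral>s. F t * dvs s t * \<phi>'' s \<partial>lborel) = - F t * FT (\<lambda>s. \<i> * of_real s * \<phi> s) t"
proof -
  have "integrable lborel (\<lambda>s. \<bar>s\<bar>^2 * norm (\<phi>'' s))"
    using C2_moment2_continuous(3)[OF \<phi>] C2_moment2_tail(3)[OF \<phi>]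
    by (rule integrable_abs_power_mult_norm_if_tail_moment2) simp
  moreover have "\<phi>'' \<in> borel_measurable lborel"
    using C2_moment2_continuous(3)[OF \<phi>] by (simp add: borel_measurable_continuous_onI)
  ultimately show "integrable (lborel \<Otimes>\<^sub>M lborel) (\<lambda>(s, t). F t * dvs s t * \<phi>'' s)"
    using F by (intro integrable_dvs_product) auto
  assume "t \<noteq> 0"
  have "(\<integral>s. F t * dvs s t * \<phi>'' s \<partial>lborel) = F t * (\<integral>s. \<phi>'' s * dvs s t \<partial>lborel)"
    by (simp add: mult_ac)
  with integral_second_deriv_mult_dvs[OF \<phi> \<open>t \<noteq> 0\<close>]
  show "(\<integral>s. F t * dvs s t * \<phi>'' s \<partial>lborel) = - F t * FT (\<lambda>s. \<i> * of_real s * \<phi> s) t"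
    by simp
qed

lemma FT_Ac_int_eq:
  assumes \<phi>: "C2_moment2 \<phi> \<phi>' \<phi>''"
    and F: "F \<in> borel_measurable lborel" "\<And>t. norm (F t) \<le> B"
  shows "FT_Ac_int F \<phi> = (\<integral>t. F t * FT (\<lambda>s. \<i> * of_real s * \<phi> s) t \<partial>lborel)"
proof -
  have "FT_Ac_int F \<phi> = (\<integral>s. Omega F s * \<phi>'' s \<partial>lborel)"
    unfolding FT_Ac_int_def
    using second_deriv_eqI[OF C2_moment2_deriv[OF \<phi>] C2_moment2_deriv2[OF \<phi>]] by simp
  also have "\<dots> = - (\<integral>s. \<integral>t. F t * dvs s t * \<phi>'' s \<partial>lborel \<partial>lborel)"
    by (simp add: Omega_eq_integral_dvs)
  also have "(\<integral>s. \<integral>t. F t * dvs s t * \<phi>'' s \<partial>lborel \<partial>lborel)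
      = (\<integral>t. \<integral>s. F t * dvs s t * \<phi>'' s \<partial>lborel \<partial>lborel)"
    using lborel_pair.Fubini_integral[OF integrable_dvs_C2_moment2[OF \<phi> F]] by simp
  also have "\<dots> = (\<integral>t. - F t * FT (\<lambda>s. \<i> * of_real s * \<phi> s) t \<partial>lborel)"
    using integral_dvs_C2_moment2[OF \<phi> F] by (intro integral_discrete_difference[where X="{0}"]) auto
  finally show ?thesis by simp
qed

lemma integrable_FT_moment:
  assumes \<phi>: "C2_moment2 \<phi> \<phi>' \<phi>''"
  shows "integrable lborel (FT (\<lambda>s. \<i> * of_real s * \<phi> s))"
proof -
  have "integrable lborel (\<lambda>t. \<integral>s. 1 * dvs s t * \<phi>'' s \<partial>lborel)"
    using integrable_dvs_C2_moment2[OF \<phi>, of "\<lambda>_. 1" 1]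
    by (intro lborel_pair.integrable_snd) auto
  moreover have "integrable lborel (\<lambda>t. \<integral>s. 1 * dvs s t * \<phi>'' s \<partial>lborel)
      \<longleftrightarrow> integrable lborel (\<lambda>t. - FT (\<lambda>s. \<i> * of_real s * \<phi> s) t)"
    using integral_dvs_C2_moment2[OF \<phi>, of "\<lambda>_. 1" 1]
    by (intro integrable_discrete_difference[where X="{0}"]) auto
  ultimately show ?thesis by simp
qed

section \<open>Fourier transforms and convolutions\<close>

lemma norm_FT_le: "norm (FT g s) \<le> (\<integral>t. norm (g t) \<partial>lborel)"
proof -
  have "norm (FT g s) \<le> (\<integral>t. norm (exp (- \<i> * of_real (s * t)) * g t) \<partial>lborel)"
    unfolding FT_def by (rule integral_norm_bound)
  also have "\<dots> = (\<integral>t. norm (g t) \<partial>lborel)"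
    by (simp add: norm_mult norm_exp_minus_ii)
  finally show ?thesis .
qed

lemma continuous_on_FT:
  assumes "g \<in> borel_measurable lborel" "integrable lborel g"
  shows "continuous_on UNIV (FT g)"
  unfolding FT_def
  using assms by (intro continuous_on_integral_param[where w="\<lambda>t. norm (g t)"])
    (auto intro!: continuous_intros simp: norm_mult norm_exp_minus_ii)

lemma has_vector_derivative_FT:
  fixes g :: "real \<Rightarrow> complex"
  assumes g: "g \<in> borel_measurable lborel" "integrable lborel g"
    and g1: "integrable lborel (\<lambda>t. \<bar>t\<bar> * norm (g t))"
  shows "(FT g has_vector_derivative FT (\<lambda>t. - \<i> * of_real t * g t) s) (at s)"
  unfolding FT_def
proof (rule has_vector_derivative_integral_param[where w="\<lambda>t. \<bar>t\<bar> * norm (g t)"])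
  fix s t
  have "((\<lambda>z. exp (- \<i> * (z * of_real t)) * g t) has_field_derivative
      exp (- \<i> * of_real (s * t)) * (- \<i> * of_real t * g t)) (at (of_real s))"
    by (auto intro!: derivative_eq_intros simp: algebra_simps)
  from has_vector_derivative_real_field[OF this]
  show "((\<lambda>s. exp (- \<i> * of_real (s * t)) * g t) has_vector_derivative
      exp (- \<i> * of_real (s * t)) * (- \<i> * of_real t * g t)) (at s)"
    by simp
  fix s'
  have "norm (exp (- \<i> * of_real (s * t)) - exp (- \<i> * of_real (s' * t))) \<le> \<bar>s - s'\<bar> * \<bar>t\<bar>"
    using norm_exp_ii_diff_le[of "- (s * t)" "- (s' * t)"] by (simp add: abs_mult[symmetric] algebra_simps)
  then show "norm (exp (- \<i> * of_real (s * t)) * g t - exp (- \<i> * of_real (s' * t)) * g t)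
      \<le> \<bar>s - s'\<bar> * (\<bar>t\<bar> * norm (g t))"
    by (simp add: left_diff_distrib[symmetric] norm_mult mult.assoc[symmetric] mult_right_mono)
qed (use g g1 in \<open>auto intro!: Bochner_Integration.integrable_bound[OF integrable_norm[OF g(2)]]
      simp: norm_mult norm_exp_minus_ii\<close>)

lemma FT_C2_bounded_if_tail_moment2:
  assumes g: "continuous_on UNIV g" "tail_moment2 g"
  obtains G1 G2 where "\<And>s. (FT g has_vector_derivative G1 s) (at s)"
    "\<And>s. (G1 has_vector_derivative G2 s) (at s)" "continuous_on UNIV G2"
    "bounded (range (FT g))" "bounded (range G1)" "bounded (range G2)"
proof -
  \<comment> \<open>\<open>FT (m k)\<close> is the \<open>k\<close>-th derivative of \<open>FT g\<close>\<close>
  define m where "m k t = (- \<i> * of_real t)^k * g t" for k t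
  have [measurable]: "g \<in> borel_measurable lborel"
    using g(1) by (simp add: borel_measurable_continuous_onI)
  then have m_meas: "m k \<in> borel_measurable lborel" for k
    unfolding m_def by measurable
  have m_norm: "integrable lborel (\<lambda>t. \<bar>t\<bar>^k * norm (g t))" if "k \<le> 2" for k
    using integrable_abs_power_mult_norm_if_tail_moment2[OF g that] .
  have m_int: "integrable lborel (m k)" if "k \<le> 2" for k
    using m_norm[OF that] m_meas
    by (intro Bochner_Integration.integrable_bound[OF _ m_meas]) (auto simp: m_def norm_mult norm_power)
  have deriv: "(FT (m k) has_vector_derivative FT (m (Suc k)) s) (at s)" if "k < 2" for k s
  proof -
    have "integrable lborel (\<lambda>t. \<bar>t\<bar> * norm (m k t))"
      using m_norm[of "Suc k"] that by (simp add: m_def norm_mult norm_power mult.assoc)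
    with that have "(FT (m k) has_vector_derivative FT (\<lambda>t. - \<i> * of_real t * m k t) s) (at s)"
      by (intro has_vector_derivative_FT m_meas m_int) auto
    moreover have "(\<lambda>t. - \<i> * of_real t * m k t) = m (Suc k)"
      by (simp add: m_def fun_eq_iff)
    ultimately show ?thesis by simp
  qed
  have bounded: "bounded (range (FT (m k)))" if "k \<le> 2" for k
    using norm_FT_le[of "m k"] by (auto simp: bounded_iff)
  have "m 0 = g" by (simp add: m_def fun_eq_iff)
  show ?thesis
  proof (rule that[of "FT (m 1)" "FT (m 2)"])
    show "(FT g has_vector_derivative FT (m 1) s) (at s)" for s
      using deriv[of 0] \<open>m 0 = g\<close> by simp
    show "(FT (m 1) has_vector_derivative FT (m 2) s) (at s)" for s
      using deriv[of 1] by (simp add: numeral_2_eq_2)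
    show "continuous_on UNIV (FT (m 2))"
      using continuous_on_FT[OF m_meas m_int] by simp
    show "bounded (range (FT g))" "bounded (range (FT (m 1)))" "bounded (range (FT (m 2)))"
      using bounded[of 0] bounded[of 1] bounded[of 2] \<open>m 0 = g\<close> by simp_all
  qed
qed

lemma C2_moment2_FT_mult:
  assumes g: "continuous_on UNIV g" "tail_moment2 g" and \<phi>: "C2_moment2 \<phi> \<phi>' \<phi>''"
  obtains \<psi>' \<psi>'' where "C2_moment2 (\<lambda>s. FT g s * \<phi> s) \<psi>' \<psi>''"
proof -
  obtain G1 G2 where d0: "\<And>s. (FT g has_vector_derivative G1 s) (at s)"
    and d1: "\<And>s. (G1 has_vector_derivative G2 s) (at s)" and c2: "continuous_on UNIV G2"
    and b: "bounded (range (FT g))" "bounded (range G1)" "bounded (range G2)"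
    using FT_C2_bounded_if_tail_moment2[OF g] by blast
  have c: "continuous_on UNIV (FT g)" "continuous_on UNIV G1" "continuous_on UNIV G2"
    using d0 d1 c2 by (auto intro!: continuous_on_vector_derivative simp: has_vector_derivative_at_within)
  note \<phi>_cont = C2_moment2_continuous[OF \<phi>] and \<phi>_tail = C2_moment2_tail[OF \<phi>]
  have "C2_moment2 (\<lambda>s. FT g s * \<phi> s) (\<lambda>s. FT g s * \<phi>' s + G1 s * \<phi> s)
     (\<lambda>s. (FT g s * \<phi>'' s + G1 s * \<phi>' s) + (G1 s * \<phi>' s + G2 s * \<phi> s))"
    unfolding C2_moment2_def
  proof (intro conjI allI)
    fix t
    show "((\<lambda>s. FT g s * \<phi> s) has_vector_derivative FT g t * \<phi>' t + G1 t * \<phi> t) (at t)"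
      by (rule has_vector_derivative_mult[OF d0 C2_moment2_deriv[OF \<phi>]])
    show "((\<lambda>s. FT g s * \<phi>' s + G1 s * \<phi> s) has_vector_derivative
        (FT g t * \<phi>'' t + G1 t * \<phi>' t) + (G1 t * \<phi>' t + G2 t * \<phi> t)) (at t)"
      by (intro has_vector_derivative_add has_vector_derivative_mult d0 d1
          C2_moment2_deriv[OF \<phi>] C2_moment2_deriv2[OF \<phi>])
  next
    show "continuous_on UNIV (\<lambda>s. (FT g s * \<phi>'' s + G1 s * \<phi>' s) + (G1 s * \<phi>' s + G2 s * \<phi> s))"
      by (intro continuous_intros c \<phi>_cont)
  qed (intro tail_moment2_add tail_moment2_bounded_mult \<phi>_tail \<phi>_cont c b)+
  then show ?thesis using that by blast
qed

lemma
  fixes F g :: "real \<Rightarrow> complex"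
  assumes F: "F \<in> borel_measurable lborel" "\<And>t. norm (F t) \<le> B" and g: "integrable lborel g"
  shows borel_measurable_conv_prim: "conv_prim F g \<in> borel_measurable lborel"
    and norm_conv_prim_le: "norm (conv_prim F g x) \<le> B * (\<integral>t. norm (g t) \<partial>lborel)"
proof -
  have [measurable]: "F \<in> borel_measurable lborel" "g \<in> borel_measurable lborel"
    using F g by auto
  show "conv_prim F g \<in> borel_measurable lborel"
    unfolding conv_prim_def by (rule lborel.borel_measurable_lebesgue_integral) measurable
  have bound: "norm (F (x - y) * g y) \<le> B * norm (g y)" for y
    unfolding norm_mult by (rule mult_right_mono[OF F(2) norm_ge_zero])
  have "norm (conv_prim F g x) \<le> (\<integral>y. norm (F (x - y) * g y) \<partial>lborel)"
    unfolding conv_prim_def by (rule integral_norm_bound)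
  also have "\<dots> \<le> (\<integral>y. B * norm (g y) \<partial>lborel)"
  proof (rule integral_mono)
    show "integrable lborel (\<lambda>y. norm (F (x - y) * g y))"
      by (rule Bochner_Integration.integrable_bound[of _ "\<lambda>y. B * norm (g y)"])
        (use g bound in \<open>auto intro: order_trans[OF _ abs_ge_self]\<close>)
  qed (use g bound in auto)
  finally show "norm (conv_prim F g x) \<le> B * (\<integral>t. norm (g t) \<partial>lborel)"
    by simp
qed

lemma integral_conv_prim_mult:
  fixes F g K :: "real \<Rightarrow> complex"
  assumes F: "F \<in> borel_measurable lborel" "\<And>t. norm (F t) \<le> B"
    and g: "integrable lborel g" and K: "integrable lborel K"
  shows "(\<integral>t. conv_prim F g t * K t \<partial>lborel) = (\<integral>u. F u * (\<integral>y. g y * K (y + u) \<partial>lborel) \<partial>lborel)"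
proof -
  have [measurable]: "F \<in> borel_measurable lborel" "g \<in> borel_measurable lborel"
    "K \<in> borel_measurable lborel"
    using F g K by auto
  have B: "0 \<le> B" using F(2)[of 0] norm_ge_zero order_trans by blast
  have FB: "norm (F u * a * b) \<le> norm (B * norm a * norm b)" for u a b
    using B unfolding norm_mult by (simp add: mult_right_mono F(2))
  have int1: "integrable (lborel \<Otimes>\<^sub>M lborel) (\<lambda>(t, y). F (t - y) * g y * K t)"
  proof (rule Bochner_Integration.integrable_bound)
    show "integrable (lborel \<Otimes>\<^sub>M lborel) (\<lambda>p. B * norm (K (fst p)) * norm (g (snd p)))"
      using K g by (intro integrable_product_lborel) auto
    show "AE p in lborel \<Otimes>\<^sub>M lborel. norm ((\<lambda>(t, y). F (t - y) * g y * K t) p)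
        \<le> norm (B * norm (K (fst p)) * norm (g (snd p)))"
      using FB[of "fst p - snd p" "g (snd p)" "K (fst p)" for p]
      by (intro AE_I2) (simp add: case_prod_beta mult_ac)
  qed measurable
  have int2: "integrable (lborel \<Otimes>\<^sub>M lborel) (\<lambda>(y, u). F u * g y * K (y + u))"
  proof (rule Bochner_Integration.integrable_bound)
    show "integrable (lborel \<Otimes>\<^sub>M lborel) (\<lambda>p. norm (g (fst p)) * (B * norm (K (fst p + snd p))))"
      using K g by (intro integrable_shear_product_lborel) auto
    show "AE p in lborel \<Otimes>\<^sub>M lborel. norm ((\<lambda>(y, u). F u * g y * K (y + u)) p)
        \<le> norm (norm (g (fst p)) * (B * norm (K (fst p + snd p))))"
      using FB[of "snd p" "g (fst p)" "K (fst p + snd p)" for p]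
      by (intro AE_I2) (simp add: case_prod_beta mult_ac)
  qed measurable
  have "(\<integral>t. conv_prim F g t * K t \<partial>lborel) = (\<integral>t. \<integral>y. F (t - y) * g y * K t \<partial>lborel \<partial>lborel)"
    unfolding conv_prim_def by simp
  also have "\<dots> = (\<integral>y. \<integral>t. F (t - y) * g y * K t \<partial>lborel \<partial>lborel)"
    using lborel_pair.Fubini_integral[OF int1] by simp
  also have "\<dots> = (\<integral>y. \<integral>u. F u * g y * K (y + u) \<partial>lborel \<partial>lborel)"
    using lborel_integral_real_affine[of 1 "\<lambda>t. F (t - y) * g y * K t" y for y] by simp
  also have "\<dots> = (\<integral>u. \<integral>y. F u * g y * K (y + u) \<partial>lborel \<partial>lborel)"
    using lborel_pair.Fubini_integral[OF int2] by simp
  finally show ?thesis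
    by (simp add: mult.assoc)
qed

lemma FT_moment_FT_mult:
  fixes g \<phi> :: "real \<Rightarrow> complex"
  assumes g: "integrable lborel g"
    and \<phi>: "\<phi> \<in> borel_measurable lborel" "integrable lborel (\<lambda>s. \<bar>s\<bar> * norm (\<phi> s))"
  shows "FT (\<lambda>s. \<i> * of_real s * (FT g s * \<phi> s)) u
    = (\<integral>y. g y * FT (\<lambda>s. \<i> * of_real s * \<phi> s) (y + u) \<partial>lborel)"
proof -
  have [measurable]: "g \<in> borel_measurable lborel" "\<phi> \<in> borel_measurable lborel"
    using g \<phi> by auto
  define A where "A s = exp (- \<i> * of_real (u * s)) * (\<i> * of_real s * \<phi> s)" for s
  define f where "f s y = A s * (exp (- \<i> * of_real (s * y)) * g y)" for s y
  have f_int: "integrable (lborel \<Otimes>\<^sub>M lborel) (\<lambda>(s, y). f s y)"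
  proof (rule Bochner_Integration.integrable_bound)
    show "integrable (lborel \<Otimes>\<^sub>M lborel) (\<lambda>p. \<bar>fst p\<bar> * norm (\<phi> (fst p)) * norm (g (snd p)))"
      using \<phi>(2) g by (intro integrable_product_lborel) auto
    show "(\<lambda>(s, y). f s y) \<in> borel_measurable (lborel \<Otimes>\<^sub>M lborel)"
      unfolding f_def A_def by measurable
    show "AE p in lborel \<Otimes>\<^sub>M lborel. norm ((\<lambda>(s, y). f s y) p)
        \<le> norm (\<bar>fst p\<bar> * norm (\<phi> (fst p)) * norm (g (snd p)))"
      by (intro AE_I2) (simp add: case_prod_beta f_def A_def norm_mult norm_exp_minus_ii)
  qed
  have "(\<integral>s. \<integral>y. f s y \<partial>lborel \<partial>lborel) = (\<integral>y. \<integral>s. f s y \<partial>lborel \<partial>lborel)"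
    by (rule lborel_pair.Fubini_integral[OF f_int, symmetric])
  moreover have "(\<integral>y. f s y \<partial>lborel) = A s * FT g s" for s
    unfolding f_def FT_def by (rule integral_mult_right_zero)
  then have "FT (\<lambda>s. \<i> * of_real s * (FT g s * \<phi> s)) u = (\<integral>s. \<integral>y. f s y \<partial>lborel \<partial>lborel)"
    unfolding FT_def[of "\<lambda>s. \<i> * of_real s * (FT g s * \<phi> s)"] A_def by (simp add: mult_ac)
  moreover have "f s y = g y * (exp (- \<i> * of_real ((y + u) * s)) * (\<i> * of_real s * \<phi> s))" for s y
  proof -
    have "exp (- \<i> * of_real (u * s)) * exp (- \<i> * of_real (s * y)) = exp (- \<i> * of_real ((y + u) * s))"
      by (simp add: exp_add[symmetric] algebra_simps)
    then show ?thesis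
      unfolding f_def A_def by (metis mult.assoc mult.commute)
  qed
  ultimately show ?thesis
    unfolding FT_def by simp
qed

theorem mainTheorem10:
  fixes F g1 g1' g1'' g2 g2' g2'' :: "real \<Rightarrow> complex"
  assumes F: "F \<in> Bc"
    and d11: "\<And>t. (g1 has_vector_derivative g1' t) (at t)"
    and d12: "\<And>t. (g1' has_vector_derivative g1'' t) (at t)"
    and c1: "continuous_on UNIV g1''"
    and d21: "\<And>t. (g2 has_vector_derivative g2' t) (at t)"
    and d22: "\<And>t. (g2' has_vector_derivative g2'' t) (at t)"
    and c2: "continuous_on UNIV g2''"
    and i10: "set_integrable lborel {t. 1 < \<bar>t\<bar>} (\<lambda>t. complex_of_real (t^2) * g1 t)"
    and i11: "set_integrable lborel {t. 1 < \<bar>t\<bar>} (\<lambda>t. complex_of_real (t^2) * g1' t)"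
    and i12: "set_integrable lborel {t. 1 < \<bar>t\<bar>} (\<lambda>t. complex_of_real (t^2) * g1'' t)"
    and i20: "set_integrable lborel {t. 1 < \<bar>t\<bar>} (\<lambda>t. complex_of_real (t^2) * g2 t)"
    and i21: "set_integrable lborel {t. 1 < \<bar>t\<bar>} (\<lambda>t. complex_of_real (t^2) * g2' t)"
    and i22: "set_integrable lborel {t. 1 < \<bar>t\<bar>} (\<lambda>t. complex_of_real (t^2) * g2'' t)"
  shows "FT_Ac_int (conv_prim F g1) g2 = FT_Ac_int F (\<lambda>s. FT g1 s * g2 s)"
proof -
  \<comment> \<open>of \<open>g1\<close> only continuity and the tail moment are needed\<close>
  obtain B where FB: "\<And>t. norm (F t) \<le> B" using Bc_bounded[OF F] by blast
  have Fm: "F \<in> borel_measurable lborel"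
    using F by (simp add: Bc_def borel_measurable_continuous_onI)
  have g1c: "continuous_on UNIV g1"
    by (rule continuous_on_vector_derivative, rule has_vector_derivative_at_within, rule d11)
  have g1t: "tail_moment2 g1" using i10 unfolding tail_moment2_def .
  have g1i: "integrable lborel g1"
    using integrable_power_mult_if_tail_moment2[OF g1c g1t, of 0] by simp
  have g2: "C2_moment2 g2 g2' g2''"
    unfolding C2_moment2_def tail_moment2_def using d21 d22 c2 i20 i21 i22 by blast
  have g2m: "g2 \<in> borel_measurable lborel"
    using C2_moment2_continuous(1)[OF g2] by (simp add: borel_measurable_continuous_onI)
  have g2n: "integrable lborel (\<lambda>s. \<bar>s\<bar> * norm (g2 s))"
    using integrable_abs_power_mult_norm_if_tail_moment2[OF C2_moment2_continuous(1)[OF g2]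
        C2_moment2_tail(1)[OF g2], of 1] by simp
  obtain \<psi>' \<psi>'' where \<psi>: "C2_moment2 (\<lambda>s. FT g1 s * g2 s) \<psi>' \<psi>''"
    using C2_moment2_FT_mult[OF g1c g1t g2] .
  have "FT_Ac_int (conv_prim F g1) g2 = (\<integral>t. conv_prim F g1 t * FT (\<lambda>s. \<i> * of_real s * g2 s) t \<partial>lborel)"
    by (rule FT_Ac_int_eq[OF g2 borel_measurable_conv_prim[OF Fm FB g1i] norm_conv_prim_le[OF Fm FB g1i]])
  also have "\<dots> = (\<integral>u. F u * (\<integral>y. g1 y * FT (\<lambda>s. \<i> * of_real s * g2 s) (y + u) \<partial>lborel) \<partial>lborel)"
    by (rule integral_conv_prim_mult[OF Fm FB g1i integrable_FT_moment[OF g2]])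
  also have "\<dots> = (\<integral>u. F u * FT (\<lambda>s. \<i> * of_real s * (FT g1 s * g2 s)) u \<partial>lborel)"
    using FT_moment_FT_mult[OF g1i g2m g2n] by simp
  also have "\<dots> = FT_Ac_int F (\<lambda>s. FT g1 s * g2 s)"
    by (rule FT_Ac_int_eq[OF \<psi> Fm FB, symmetric])
  finally show ?thesis .
qed

end
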